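(* With the setup in the context, assume $Q>2m$ and $Q\ge1$. Choose $N$ so that $v_1:=v\in N$ and every non-fixed vertex $x$ with $\mathrm{dist}(v_1,x)<\mathrm{dist}(v_1',x)$ lies in $N$ (vertices with $\mathrm{dist}(v_1,x)=\mathrm{dist}(v_1',x)$ may be placed arbitrarily). Label $N=\{v_1,\dots,v_k\}$ and define $y\in\mathbb{R}^k$ by $$y_i=\begin{cases}Q^{-\mathrm{dist}(v_1,v_i)} & \text{if } \mathrm{dist}(v_1,v_i)<\mathrm{dist}(v_1',v_i),\\ 0 & \text{if } \mathrm{dist}(v_1,v_i)=\mathrm{dist}(v_1',v_i).\end{cases}$$ Then the second largest eigenvalue $\lambda_2$ of $H$ satisfies $$\lambda_2\ \ge\ Q-\frac{1+\sum_{i\ne 1}\big(\deg_{N\cup\sigma N}(v_i)-1\big)y_i^2}{\sum_i y_i^2}.$$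
   Context: $G$ is a finite, simple, connected graph with vertex set $V$, maximum degree $m$, and an involution $\sigma$ (a bijection $V\to V$ with $\sigma\circ\sigma=\mathrm{id}$ such that $x\sim y$ implies $\sigma(x)\sim\sigma(y)$); write $x'=\sigma(x)$. Fix $v\in V$ with $v'\ne v$, and let $H=A_G+D_Q$ (adjacency matrix plus diagonal potential) with potential $Q$ at $v$ and $v'$ and $0$ elsewhere. $S=\{x: x'=x\}$ is the set of fixed vertices, $N$ is a set containing exactly one vertex from each pair $\{x,x'\}$ with $x\ne x'$, $|N|=k$, and $\sigma N=\{x':x\in N\}$. $\mathrm{dist}$ is graph distance and $\deg_{N\cup\sigma N}(v_i)$ is the number of neighbours of $v_i$ in $N\cup\sigma N$. The eigenvalues of $H$ are $\lambda_1\ge\lambda_2\ge\dots\ge\lambda_n$. *)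

theory Defs
  imports "Jordan_Normal_Form.Char_Poly" "HOL-Library.Multiset"
begin

definition simple_graph :: "nat \<Rightarrow> (nat \<Rightarrow> nat \<Rightarrow> bool) \<Rightarrow> bool" where
  "simple_graph n E \<longleftrightarrow> (\<forall>x y. E x y \<longrightarrow> x < n \<and> y < n) \<and> (\<forall>x y. E x y \<longrightarrow> E y x) \<and> (\<forall>x. \<not> E x x)"

text \<open>A walk with vertex list xs (length of the walk = length xs - 1).\<close>
fun is_walk :: "(nat \<Rightarrow> nat \<Rightarrow> bool) \<Rightarrow> nat list \<Rightarrow> bool" where
  "is_walk E [] = False"
| "is_walk E [x] = True"
| "is_walk E (x # y # zs) = (E x y \<and> is_walk E (y # zs))"

definition connected_graph :: "nat \<Rightarrow> (nat \<Rightarrow> nat \<Rightarrow> bool) \<Rightarrow> bool" where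
  "connected_graph n E \<longleftrightarrow> (\<forall>x<n. \<forall>y<n. \<exists>xs. is_walk E xs \<and> hd xs = x \<and> last xs = y)"

definition gdist :: "(nat \<Rightarrow> nat \<Rightarrow> bool) \<Rightarrow> nat \<Rightarrow> nat \<Rightarrow> nat" where
  "gdist E x y = (LEAST k. \<exists>xs. is_walk E xs \<and> hd xs = x \<and> last xs = y \<and> length xs = Suc k)"

definition degree_in :: "(nat \<Rightarrow> nat \<Rightarrow> bool) \<Rightarrow> nat set \<Rightarrow> nat \<Rightarrow> nat" where
  "degree_in E A x = card {u \<in> A. E x u}"

definition max_degree :: "nat \<Rightarrow> (nat \<Rightarrow> nat \<Rightarrow> bool) \<Rightarrow> nat" where
  "max_degree n E = Max ((\<lambda>x. degree_in E {0..<n} x) ` {0..<n})"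

definition graph_involution :: "nat \<Rightarrow> (nat \<Rightarrow> nat \<Rightarrow> bool) \<Rightarrow> (nat \<Rightarrow> nat) \<Rightarrow> bool" where
  "graph_involution n E \<sigma> \<longleftrightarrow> (\<forall>x<n. \<sigma> x < n \<and> \<sigma> (\<sigma> x) = x) \<and> (\<forall>x y. E x y \<longrightarrow> E (\<sigma> x) (\<sigma> y))"

definition Hmat :: "nat \<Rightarrow> (nat \<Rightarrow> nat \<Rightarrow> bool) \<Rightarrow> (nat \<Rightarrow> nat) \<Rightarrow> nat \<Rightarrow> real \<Rightarrow> real mat" where
  "Hmat n E \<sigma> v Q = mat n n (\<lambda>(i, j). (if E i j then 1 else 0) + (if i = j \<and> (i = v \<or> i = \<sigma> v) then Q else 0))"

text \<open>Eigenvalues with multiplicity, listed in decreasing order: lambda_1 \<ge> lambda_2 \<ge> ...\<close>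
definition eigenvalues_desc :: "real mat \<Rightarrow> real list" where
  "eigenvalues_desc A = rev (sorted_list_of_multiset (proots (char_poly A)))"

definition pair_selection :: "nat \<Rightarrow> (nat \<Rightarrow> nat) \<Rightarrow> nat set \<Rightarrow> bool" where
  "pair_selection n \<sigma> N \<longleftrightarrow> N \<subseteq> {x. x < n \<and> \<sigma> x \<noteq> x} \<and>
     (\<forall>x<n. \<sigma> x \<noteq> x \<longrightarrow> (x \<in> N \<longleftrightarrow> \<sigma> x \<notin> N))"

end

theory Submission
  imports Defs "Jordan_Normal_Form.Schur_Decomposition"
begin

text \<open>
  Extend \<open>y\<close> to a vector \<open>f\<close> on all vertices by \<open>f = y\<close> on \<open>N\<close>, \<open>f x' = - y x\<close> for
  \<open>x \<in> N\<close> and \<open>f = 0\<close> on fixed vertices. Since \<open>\<sigma>\<close> is an automorphism of \<open>H\<close>, \<open>f\<close> is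
  \<open>\<sigma>\<close>-odd and \<open>|f|\<close> is \<open>\<sigma>\<close>-even, so the two are orthogonal and \<open>H\<close>-orthogonal; as \<open>H\<close>
  is entrywise nonnegative, the Rayleigh quotient of \<open>|f|\<close> is at least that of \<open>f\<close>, and by the
  min-max principle \<open>\<lambda>\<^sub>2\<close> is at least the Rayleigh quotient of \<open>f\<close>. To bound the latter, every
  \<open>i \<in> N - {v}\<close> with \<open>y i \<noteq> 0\<close> has a neighbour \<open>p \<in> N\<close> one step closer to \<open>v\<close>, so
  \<open>f p = Q * y i\<close>, while every other neighbour of \<open>i\<close> in \<open>N \<union> \<sigma> ` N\<close> has \<open>f \<ge> - y i\<close>;
  the only negative neighbour of \<open>v\<close> is \<open>v'\<close>, where \<open>f = -1\<close>.
\<close>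

section \<open>Spectral theorem for real symmetric matrices\<close>

lemma conjugate_mult_mat_vec_of_real:
  fixes A :: "real mat" and z :: "complex vec"
  assumes A: "A \<in> carrier_mat n n" and z: "z \<in> carrier_vec n"
  shows "conjugate (of_real_hom.mat_hom A *\<^sub>v z) = of_real_hom.mat_hom A *\<^sub>v conjugate z"
proof (rule eq_vecI)
  fix i assume "i < dim_vec (of_real_hom.mat_hom A *\<^sub>v conjugate z)"
  hence i: "i < n" using A by simp
  let ?r = "row (of_real_hom.mat_hom A :: complex mat) i"
  have r: "?r \<in> carrier_vec n" using A by (intro carrier_vecI) simp
  have "conjugate ?r = ?r"
    using A i by (intro eq_vecI) auto
  hence "conjugate (?r \<bullet> z) = ?r \<bullet>c z"
    using conjugate_sprod_vec[OF r z] by simp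
  with i A show "conjugate (of_real_hom.mat_hom A *\<^sub>v z) $ i = (of_real_hom.mat_hom A *\<^sub>v conjugate z) $ i"
    by simp
qed (use A in simp)

lemma eigenvalue_of_complexified_symmetric_is_real:
  fixes A :: "real mat"
  assumes A: "A \<in> carrier_mat n n" and sym: "transpose_mat A = A"
    and ev: "eigenvector (of_real_hom.mat_hom A) z a"
  shows "Im a = 0"
proof -
  let ?A = "of_real_hom.mat_hom A"
  have Ac: "?A \<in> carrier_mat n n" using A by simp
  have z: "z \<in> carrier_vec n" "z \<noteq> 0\<^sub>v n" and Az: "?A *\<^sub>v z = a \<cdot>\<^sub>v z"
    using ev Ac unfolding eigenvector_def by auto
  have sym': "transpose_mat ?A = ?A"
  proof (rule eq_matI)
    fix i j assume "i < dim_row ?A" "j < dim_col ?A"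
    thus "transpose_mat ?A $$ (i, j) = ?A $$ (i, j)"
      using A arg_cong[OF sym, of "\<lambda>B. B $$ (i, j)"] by simp
  qed (use A in simp_all)
  have "(?A *\<^sub>v z) \<bullet>c z = z \<bullet> (?A *\<^sub>v conjugate z)"
    using transpose_vec_mult_scalar[OF Ac, where x = "conjugate z" and y = z] z
    unfolding sym' by simp
  also have "\<dots> = z \<bullet>c (?A *\<^sub>v z)"
    using conjugate_mult_mat_vec_of_real[OF A z(1)] by simp
  finally have "a * (z \<bullet>c z) = cnj a * (z \<bullet>c z)"
    using z(1) by (simp add: Az conjugate_smult_vec)
  moreover have "z \<bullet>c z \<noteq> 0" using z by simp
  ultimately have "cnj a = a" by simp
  from arg_cong[OF this, of Im] show ?thesis by simp
qed

lemma real_symmetric_mat_has_eigenvalue: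
  fixes A :: "real mat"
  assumes A: "A \<in> carrier_mat n n" and sym: "transpose_mat A = A" and n: "n > 0"
  obtains e where "eigenvalue A e"
proof -
  let ?A = "of_real_hom.mat_hom A :: complex mat"
  have Ac: "?A \<in> carrier_mat n n" using A by simp
  obtain as where as: "char_poly ?A = (\<Prod>a\<leftarrow>as. [:- a, 1:])" "length as = n"
    using char_poly_factorized[OF Ac] by blast
  then obtain a where "a \<in> set as" using n by (cases as) auto
  hence "poly (char_poly ?A) a = 0" unfolding as(1) by (induction as) auto
  hence "eigenvalue ?A a" using eigenvalue_root_char_poly[OF Ac] by simp
  then obtain z where "eigenvector ?A z a" using find_eigenvector[OF Ac] by blast
  hence "Im a = 0" by (rule eigenvalue_of_complexified_symmetric_is_real[OF A sym])
  hence "complex_of_real (Re a) = a" by (simp add: complex_eq_iff)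
  moreover have "poly (char_poly ?A) (complex_of_real (Re a)) = complex_of_real (poly (char_poly A) (Re a))"
    by (simp add: of_real_hom.char_poly_hom[OF A] of_real_hom.poly_map_poly)
  ultimately have "complex_of_real (poly (char_poly A) (Re a)) = poly (char_poly ?A) a" by simp
  also have "\<dots> = 0" by fact
  finally show thesis using that eigenvalue_root_char_poly[OF A] by simp
qed

lemma unit_eigenvector_exists:
  fixes A :: "real mat"
  assumes A: "A \<in> carrier_mat n n" and "eigenvalue A e"
  obtains u where "u \<in> carrier_vec n" "u \<bullet> u = 1" "A *\<^sub>v u = e \<cdot>\<^sub>v u"
proof -
  obtain w where "eigenvector A w e" using find_eigenvector[OF assms] by blast
  hence w: "w \<in> carrier_vec n" "w \<noteq> 0\<^sub>v n" "A *\<^sub>v w = e \<cdot>\<^sub>v w"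
    using A unfolding eigenvector_def by auto
  have ww: "w \<bullet> w > 0" using conjugate_square_greater_0_vec[OF w(1)] w(2) by simp
  show thesis
  proof (rule that[of "(1 / sqrt (w \<bullet> w)) \<cdot>\<^sub>v w"])
    show "((1 / sqrt (w \<bullet> w)) \<cdot>\<^sub>v w) \<bullet> ((1 / sqrt (w \<bullet> w)) \<cdot>\<^sub>v w) = 1"
      using w(1) ww by simp
    show "A *\<^sub>v ((1 / sqrt (w \<bullet> w)) \<cdot>\<^sub>v w) = e \<cdot>\<^sub>v ((1 / sqrt (w \<bullet> w)) \<cdot>\<^sub>v w)"
      using w A by (simp add: mult_mat_vec smult_smult_assoc mult.commute)
  qed (use w in simp)
qed

lemma corthogonal_basis_with_first:
  fixes v :: "real vec"
  assumes v: "v \<in> carrier_vec n" "v \<noteq> 0\<^sub>v n"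
  obtains ws where "set ws \<subseteq> carrier_vec n" "corthogonal ws" "length ws = n" "ws ! 0 = v"
proof -
  interpret cof_vec_space n "TYPE(real)" .
  have n: "n > 0" using v by (cases n) auto
  define b where "b = basis_completion v"
  define ws where "ws = gram_schmidt n b"
  from basis_completion[OF v, folded b_def]
  have b: "distinct b" "\<not> lin_dep (set b)" "set b \<subseteq> carrier_vec n" "hd b = v" "length b = n"
    by auto
  then obtain vs where bv: "b = v # vs" using n by (cases b) auto
  from gram_schmidt_result[OF b(3,1,2) refl, folded ws_def]
  have ws: "set ws \<subseteq> carrier_vec n" "corthogonal ws" "length ws = n"
    by (auto simp: b(5))
  moreover have "ws ! 0 = v"
    using gram_schmidt_hd[OF v(1), of vs, folded bv ws_def] ws(3) n by (cases ws) auto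
  ultimately show thesis by (rule that)
qed

lemma orthogonal_mat_with_first_col:
  fixes v :: "real vec"
  assumes v: "v \<in> carrier_vec n" and vv: "v \<bullet> v = 1"
  obtains W where "W \<in> carrier_mat n n" "transpose_mat W * W = 1\<^sub>m n" "col W 0 = v"
proof -
  have v0: "v \<noteq> 0\<^sub>v n" using vv v by auto
  obtain ws where ws: "set ws \<subseteq> carrier_vec n" "corthogonal ws" "length ws = n" "ws ! 0 = v"
    using corthogonal_basis_with_first[OF v v0] .
  have wsi: "ws ! i \<in> carrier_vec n" if "i < n" for i using ws that by auto
  have ws_orth: "ws ! i \<bullet> ws ! j = 0 \<longleftrightarrow> i \<noteq> j" if "i < n" "j < n" for i j
    using ws(2,3) that unfolding corthogonal_def by simp
  have ws_pos: "ws ! i \<bullet> ws ! i > 0" if "i < n" for i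
    using conjugate_square_ge_0_vec[of "ws ! i"] ws_orth[OF that that] by simp
  define us where "us = map (\<lambda>w. (1 / sqrt (w \<bullet> w)) \<cdot>\<^sub>v w) ws"
  have us: "us ! i = (1 / sqrt (ws ! i \<bullet> ws ! i)) \<cdot>\<^sub>v ws ! i" "us ! i \<in> carrier_vec n"
    if "i < n" for i
    unfolding us_def using wsi[OF that] that ws(3) by simp_all
  have us_ip: "us ! i \<bullet> us ! j = (if i = j then 1 else 0)" if "i < n" "j < n" for i j
    using ws_orth[OF that] ws_pos[OF that(1)] wsi[OF that(1)] wsi[OF that(2)]
    by (cases "i = j") (simp_all add: us[OF that(1)] us[OF that(2)])
  define W where "W = mat_of_cols n us"
  have colW: "col W i = us ! i" if "i < n" for i
    unfolding W_def using that us(2)[OF that] ws(3) by (simp add: us_def)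
  show thesis
  proof (rule that)
    show W: "W \<in> carrier_mat n n" unfolding W_def
      using mat_of_cols_carrier(1)[of n us] ws(3) by (simp add: us_def)
    show "transpose_mat W * W = 1\<^sub>m n"
      by (rule eq_matI) (use W in \<open>auto simp: colW us_ip\<close>)
    show "col W 0 = v"
      using colW[of 0] us(1)[of 0] ws vv v0 v by (cases n) auto
  qed
qed

lemma transpose_congruence_symmetric:
  fixes A W :: "'a :: comm_ring_1 mat"
  assumes A: "A \<in> carrier_mat n n" and W: "W \<in> carrier_mat n m" and sym: "transpose_mat A = A"
  shows "transpose_mat (transpose_mat W * A * W) = transpose_mat W * A * W"
proof -
  have "transpose_mat (transpose_mat W * A) = A * W"
    using transpose_mult[of "transpose_mat W" m n A n] A W by (simp add: sym)
  hence "transpose_mat (transpose_mat W * A * W) = transpose_mat W * (A * W)"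
    using transpose_mult[of "transpose_mat W * A" m n W m] A W by simp
  thus ?thesis using A W by (simp add: assoc_mult_mat[of _ m n _ n _ m])
qed

lemma orthogonal_deflation:
  fixes A W :: "real mat"
  assumes A: "A \<in> carrier_mat (Suc m) (Suc m)" and sym: "transpose_mat A = A"
    and W: "W \<in> carrier_mat (Suc m) (Suc m)" and WW: "transpose_mat W * W = 1\<^sub>m (Suc m)"
    and eig: "A *\<^sub>v col W 0 = e \<cdot>\<^sub>v col W 0"
  obtains B where "B \<in> carrier_mat m m" "transpose_mat B = B"
    "transpose_mat W * A * W = four_block_mat (mat 1 1 (\<lambda>_. e)) (0\<^sub>m 1 m) (0\<^sub>m m 1) B"
proof -
  define A' where "A' = transpose_mat W * A * W"
  have A': "A' \<in> carrier_mat (Suc m) (Suc m)" unfolding A'_def using A W by simp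
  have A'_sym: "A' $$ (i, j) = A' $$ (j, i)" if "i < Suc m" "j < Suc m" for i j
    using transpose_congruence_symmetric[OF A W sym, folded A'_def] A' that
    by (metis carrier_matD(1,2) index_transpose_mat(1))
  have A'_col0: "A' $$ (i, 0) = (if i = 0 then e else 0)" if i: "i < Suc m" for i
  proof -
    have "A' $$ (i, 0) = col W i \<bullet> (A *\<^sub>v col W 0)"
      unfolding A'_def using A W i
      by (simp add: assoc_mult_mat[of _ _ "Suc m" _ "Suc m" _ "Suc m"] col_mult2 mult_mat_vec_def)
    also have "\<dots> = e * (transpose_mat W * W) $$ (i, 0)"
      using W i by (simp add: eig)
    finally show ?thesis using WW i by simp
  qed
  define B where "B = mat m m (\<lambda>(i, j). A' $$ (Suc i, Suc j))"
  show thesis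
  proof (rule that)
    show "B \<in> carrier_mat m m" unfolding B_def by simp
    show "transpose_mat B = B" unfolding B_def by (rule eq_matI) (auto simp: A'_sym)
    show "transpose_mat W * A * W = four_block_mat (mat 1 1 (\<lambda>_. e)) (0\<^sub>m 1 m) (0\<^sub>m m 1) B"
      unfolding A'_def[symmetric]
    proof (rule eq_matI)
      fix i j assume "i < dim_row (four_block_mat (mat 1 1 (\<lambda>_. e)) (0\<^sub>m 1 m) (0\<^sub>m m 1) B)"
        "j < dim_col (four_block_mat (mat 1 1 (\<lambda>_. e)) (0\<^sub>m 1 m) (0\<^sub>m m 1) B)"
      hence ij: "i < Suc m" "j < Suc m" unfolding B_def by auto
      show "A' $$ (i, j) = four_block_mat (mat 1 1 (\<lambda>_. e)) (0\<^sub>m 1 m) (0\<^sub>m m 1) B $$ (i, j)"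
        using A'_col0[OF ij(1)] A'_col0[OF ij(2)] A'_sym[OF ij] ij unfolding B_def
        by (cases i; cases j) auto
    qed (use A' B_def in auto)
  qed
qed

lemma orthogonal_mult:
  fixes W P A :: "'a :: comm_ring_1 mat"
  assumes W: "W \<in> carrier_mat n n" "transpose_mat W * W = 1\<^sub>m n"
    and P: "P \<in> carrier_mat n n" "transpose_mat P * P = 1\<^sub>m n"
    and A: "A \<in> carrier_mat n n"
  shows "transpose_mat (W * P) * (W * P) = 1\<^sub>m n"
    and "transpose_mat (W * P) * A * (W * P) = transpose_mat P * (transpose_mat W * A * W) * P"
proof -
  have "transpose_mat (W * P) * (W * P) = transpose_mat P * ((transpose_mat W * W) * P)"
    using W(1) P(1) by (simp add: transpose_mult[of _ n n _ n] assoc_mult_mat[of _ n n _ n _ n])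
  also have "\<dots> = 1\<^sub>m n" using W(2) P by simp
  finally show "transpose_mat (W * P) * (W * P) = 1\<^sub>m n" .
  show "transpose_mat (W * P) * A * (W * P) = transpose_mat P * (transpose_mat W * A * W) * P"
    using W P A by (simp add: transpose_mult[of _ n n _ n] assoc_mult_mat[of _ n n _ n _ n])
qed

lemma orthogonal_four_block_diag:
  fixes P A1 B :: "'a :: comm_ring_1 mat"
  assumes P: "P \<in> carrier_mat m m" "transpose_mat P * P = 1\<^sub>m m"
    and A1: "A1 \<in> carrier_mat 1 1" and B: "B \<in> carrier_mat m m"
  defines "P' \<equiv> four_block_mat (1\<^sub>m 1) (0\<^sub>m 1 m) (0\<^sub>m m 1) P"
  shows "P' \<in> carrier_mat (Suc m) (Suc m)" and "transpose_mat P' * P' = 1\<^sub>m (Suc m)"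
    and "transpose_mat P' * four_block_mat A1 (0\<^sub>m 1 m) (0\<^sub>m m 1) B * P'
      = four_block_mat A1 (0\<^sub>m 1 m) (0\<^sub>m m 1) (transpose_mat P * B * P)"
proof -
  note mult_blocks = mult_four_block_mat[where ?nr1.0 = 1 and ?n1.0 = 1 and ?nc1.0 = 1
      and ?nr2.0 = m and ?n2.0 = m and ?nc2.0 = m]
  have PT: "transpose_mat P' = four_block_mat (1\<^sub>m 1) (0\<^sub>m 1 m) (0\<^sub>m m 1) (transpose_mat P)"
    unfolding P'_def using P by (subst transpose_four_block_mat[of _ 1 1 _ m _ m]) auto
  show "P' \<in> carrier_mat (Suc m) (Suc m)" unfolding P'_def using P by auto
  show "transpose_mat P' * P' = 1\<^sub>m (Suc m)"
    unfolding PT unfolding P'_def using P by (subst mult_blocks) auto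
  show "transpose_mat P' * four_block_mat A1 (0\<^sub>m 1 m) (0\<^sub>m m 1) B * P'
      = four_block_mat A1 (0\<^sub>m 1 m) (0\<^sub>m m 1) (transpose_mat P * B * P)"
    unfolding PT unfolding P'_def using P A1 B by (simp add: mult_blocks)
qed

lemma diagonal_four_block_mat:
  assumes "A1 \<in> carrier_mat 1 1" "B \<in> carrier_mat m m" "diagonal_mat B"
  shows "diagonal_mat (four_block_mat A1 (0\<^sub>m 1 m) (0\<^sub>m m 1) B)"
  unfolding diagonal_mat_def
proof (intro allI impI)
  fix i j
  assume "i < dim_row (four_block_mat A1 (0\<^sub>m 1 m) (0\<^sub>m m 1) B)"
    "j < dim_col (four_block_mat A1 (0\<^sub>m 1 m) (0\<^sub>m m 1) B)" "i \<noteq> j"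
  thus "four_block_mat A1 (0\<^sub>m 1 m) (0\<^sub>m m 1) B $$ (i, j) = 0"
    using assms by (cases i; cases j) (auto simp: diagonal_mat_def)
qed

theorem real_symmetric_orthogonally_diagonalizable:
  fixes A :: "real mat"
  assumes "A \<in> carrier_mat n n" and "transpose_mat A = A"
  shows "\<exists>Q \<in> carrier_mat n n. transpose_mat Q * Q = 1\<^sub>m n \<and> diagonal_mat (transpose_mat Q * A * Q)"
  using assms
proof (induction n arbitrary: A)
  case 0
  show ?case by (intro bexI[of _ "1\<^sub>m 0"]) (auto simp: diagonal_mat_def)
next
  case (Suc m A)
  obtain e where "eigenvalue A e" using real_symmetric_mat_has_eigenvalue[OF Suc.prems] by auto
  then obtain u where u: "u \<in> carrier_vec (Suc m)" "u \<bullet> u = 1" "A *\<^sub>v u = e \<cdot>\<^sub>v u"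
    using unit_eigenvector_exists[OF Suc.prems(1)] by blast
  obtain W where W: "W \<in> carrier_mat (Suc m) (Suc m)" "transpose_mat W * W = 1\<^sub>m (Suc m)" "col W 0 = u"
    using orthogonal_mat_with_first_col[OF u(1,2)] by blast
  obtain B where B: "B \<in> carrier_mat m m" "transpose_mat B = B"
    and WAW: "transpose_mat W * A * W = four_block_mat (mat 1 1 (\<lambda>_. e)) (0\<^sub>m 1 m) (0\<^sub>m m 1) B"
    using orthogonal_deflation[OF Suc.prems W(1,2)] u(3) W(3) by metis
  obtain P where P: "P \<in> carrier_mat m m" "transpose_mat P * P = 1\<^sub>m m"
    "diagonal_mat (transpose_mat P * B * P)"
    using Suc.IH[OF B] by blast
  define P' where "P' = four_block_mat (1\<^sub>m 1) (0\<^sub>m 1 m) (0\<^sub>m m 1) P"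
  have e: "mat 1 1 (\<lambda>_. e) \<in> carrier_mat 1 1" by simp
  note P' = orthogonal_four_block_diag[OF P(1,2) e B(1), folded P'_def]
  have "transpose_mat (W * P') * A * (W * P') = transpose_mat P' * (transpose_mat W * A * W) * P'"
    by (rule orthogonal_mult(2)[OF W(1,2) P'(1,2) Suc.prems(1)])
  also have "\<dots> = four_block_mat (mat 1 1 (\<lambda>_. e)) (0\<^sub>m 1 m) (0\<^sub>m m 1) (transpose_mat P * B * P)"
    unfolding WAW by (rule P'(3))
  also have "diagonal_mat \<dots>"
    by (rule diagonal_four_block_mat) (use P B in simp_all)
  finally have "diagonal_mat (transpose_mat (W * P') * A * (W * P'))" .
  moreover have "transpose_mat (W * P') * (W * P') = 1\<^sub>m (Suc m)"
    using P' W by (simp add: orthogonal_mult(1))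
  moreover have "W * P' \<in> carrier_mat (Suc m) (Suc m)" using W P' by simp
  ultimately show ?case by blast
qed

section \<open>A lower bound for the second eigenvalue\<close>

lemma proots_prod_linear_factors:
  "proots (\<Prod>a\<leftarrow>as. [:- a, 1:]) = mset (as :: 'a :: idom list)"
proof (induction as)
  case (Cons a as)
  have "(\<Prod>a\<leftarrow>as. [:- a, 1:]) \<noteq> 0" by (auto simp: prod_list_zero_iff)
  thus ?case using Cons.IH by (simp del: mult_pCons_left add: proots_mult)
qed simp

lemma orthogonal_mat_right_inverse:
  fixes Q :: "'a :: field mat"
  assumes "Q \<in> carrier_mat n n" "transpose_mat Q * Q = 1\<^sub>m n"
  shows "Q * transpose_mat Q = 1\<^sub>m n"
  using mat_mult_left_right_inverse[of "transpose_mat Q" n Q] assms by auto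

lemma eigenvalues_desc_orthogonal_diag:
  fixes A Q :: "real mat"
  assumes A: "A \<in> carrier_mat n n" and Q: "Q \<in> carrier_mat n n" "transpose_mat Q * Q = 1\<^sub>m n"
    and dg: "diagonal_mat (transpose_mat Q * A * Q)"
  shows "eigenvalues_desc A = rev (sort (map (\<lambda>i. (transpose_mat Q * A * Q) $$ (i, i)) [0..<n]))"
proof -
  define D where "D = transpose_mat Q * A * Q"
  have D: "D \<in> carrier_mat n n" unfolding D_def using A Q by auto
  have QQ: "Q * transpose_mat Q = 1\<^sub>m n" by (rule orthogonal_mat_right_inverse[OF Q])
  have "Q * D * transpose_mat Q = (Q * transpose_mat Q) * A * (Q * transpose_mat Q)"
    unfolding D_def using A Q by (simp add: assoc_mult_mat[of _ n n _ n _ n])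
  hence "similar_mat_wit A D Q (transpose_mat Q)"
    unfolding similar_mat_wit_def Let_def using A Q D QQ by auto
  hence "char_poly A = char_poly D" by (intro char_poly_similar) (auto simp: similar_mat_def)
  also have "\<dots> = (\<Prod>a\<leftarrow>diag_mat D. [:- a, 1:])"
    using dg D unfolding D_def[symmetric]
    by (intro char_poly_upper_triangular) (auto simp: diagonal_mat_def upper_triangular_def)
  also have "diag_mat D = map (\<lambda>i. D $$ (i, i)) [0..<n]" unfolding diag_mat_def using D by simp
  finally have cp: "char_poly A = (\<Prod>a\<leftarrow>map (\<lambda>i. D $$ (i, i)) [0..<n]. [:- a, 1:])" .
  show ?thesis
    unfolding eigenvalues_desc_def cp proots_prod_linear_factors sorted_list_of_multiset_mset D_def ..
qed

lemma rev_sort_nth_one_ge: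
  fixes ds :: "'a :: linorder list"
  assumes "i < length ds" "j < length ds" "i \<noteq> j" "\<mu> \<le> ds ! i" "\<mu> \<le> ds ! j"
  shows "\<mu> \<le> rev (sort ds) ! 1"
proof (rule ccontr)
  define L where "L = rev (sort ds)"
  assume "\<not> \<mu> \<le> rev (sort ds) ! 1"
  hence small: "L ! 1 < \<mu>" unfolding L_def by simp
  have sorted: "L ! k \<le> L ! 1" if "1 \<le> k" "k < length L" for k
  proof -
    have "sorted (rev L)" unfolding L_def by simp
    hence "rev L ! (length L - 1 - k) \<le> rev L ! (length L - 1 - 1)"
      using that by (intro sorted_nth_mono) auto
    thus ?thesis using that by (simp add: rev_nth)
  qed
  have "k = 0" if "k < length L" "\<mu> \<le> L ! k" for k
  proof (rule ccontr)
    assume "k \<noteq> 0"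
    hence "L ! k < \<mu>" using sorted[of k] small that(1) by simp
    thus False using that(2) by simp
  qed
  hence "{k. k < length L \<and> \<mu> \<le> L ! k} \<subseteq> {0}" by blast
  hence "card {k. k < length L \<and> \<mu> \<le> L ! k} \<le> 1"
    using card_mono[of "{0}"] by simp
  moreover have "mset (filter ((\<le>) \<mu>) L) = mset (filter ((\<le>) \<mu>) ds)"
    unfolding L_def by simp
  hence "length (filter ((\<le>) \<mu>) L) = length (filter ((\<le>) \<mu>) ds)"
    by (metis size_mset)
  moreover have "card {i, j} \<le> card {k. k < length ds \<and> \<mu> \<le> ds ! k}"
    using assms by (intro card_mono) auto
  ultimately show False
    using assms(3) by (simp add: length_filter_conv_card)
qed

lemma orthogonal_transpose_scalar_prod:
  fixes Q :: "'a :: field mat"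
  assumes Q: "Q \<in> carrier_mat n n" "transpose_mat Q * Q = 1\<^sub>m n"
    and x: "x \<in> carrier_vec n" and y: "y \<in> carrier_vec n"
  shows "(transpose_mat Q *\<^sub>v x) \<bullet> (transpose_mat Q *\<^sub>v y) = x \<bullet> y"
proof -
  have "(transpose_mat Q *\<^sub>v x) \<bullet> (transpose_mat Q *\<^sub>v y) = x \<bullet> (Q *\<^sub>v (transpose_mat Q *\<^sub>v y))"
    using Q x y by (intro transpose_vec_mult_scalar) auto
  also have "Q *\<^sub>v (transpose_mat Q *\<^sub>v y) = (Q * transpose_mat Q) *\<^sub>v y"
    using Q y by (simp add: assoc_mult_mat_vec[of _ n n])
  finally show ?thesis using orthogonal_mat_right_inverse[OF Q] y by simp
qed

lemma orthogonal_congruence_mult_vec: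
  fixes Q A :: "'a :: field mat"
  assumes Q: "Q \<in> carrier_mat n n" "transpose_mat Q * Q = 1\<^sub>m n"
    and A: "A \<in> carrier_mat n n" and x: "x \<in> carrier_vec n"
  shows "(transpose_mat Q * A * Q) *\<^sub>v (transpose_mat Q *\<^sub>v x) = transpose_mat Q *\<^sub>v (A *\<^sub>v x)"
proof -
  have QTx: "transpose_mat Q *\<^sub>v x \<in> carrier_vec n" using Q x by simp
  have "(transpose_mat Q * A * Q) *\<^sub>v (transpose_mat Q *\<^sub>v x)
      = (transpose_mat Q * A) *\<^sub>v (Q *\<^sub>v (transpose_mat Q *\<^sub>v x))"
    by (rule assoc_mult_mat_vec) (use Q A QTx in auto)
  also have "\<dots> = transpose_mat Q *\<^sub>v (A *\<^sub>v ((Q * transpose_mat Q) *\<^sub>v x))"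
    using Q A x by (simp add: assoc_mult_mat_vec[of _ n n _ n])
  finally show ?thesis using orthogonal_mat_right_inverse[OF Q] x by simp
qed

lemma diagonal_quadratic_form:
  fixes D :: "'a :: comm_ring_1 mat"
  assumes D: "D \<in> carrier_mat n n" "diagonal_mat D" and z: "z \<in> carrier_vec n"
  shows "z \<bullet> (D *\<^sub>v z) = (\<Sum>i<n. D $$ (i, i) * (z $ i)^2)"
proof -
  have "(D *\<^sub>v z) $ i = D $$ (i, i) * z $ i" if i: "i < n" for i
  proof -
    have "(D *\<^sub>v z) $ i = (\<Sum>j\<in>{0..<n}. D $$ (i, j) * z $ j)"
      using D z i by (simp add: scalar_prod_def)
    also have "\<dots> = D $$ (i, i) * z $ i"
      using D i by (subst sum.remove[of _ i]) (auto simp: diagonal_mat_def intro!: sum.neutral)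
    finally show ?thesis .
  qed
  thus ?thesis using D z
    by (auto simp: scalar_prod_def lessThan_atLeast0 power2_eq_square ac_simps intro!: sum.cong)
qed

lemma diagonal_quadratic_form_less:
  fixes D :: "real mat"
  assumes D: "D \<in> carrier_mat n n" "diagonal_mat D" and z: "z \<in> carrier_vec n" "z \<noteq> 0\<^sub>v n"
    and vanish: "\<And>k. k < n \<Longrightarrow> \<mu> \<le> D $$ (k, k) \<Longrightarrow> z $ k = 0"
  shows "z \<bullet> (D *\<^sub>v z) < \<mu> * (z \<bullet> z)"
proof -
  obtain k where k: "k < n" "z $ k \<noteq> 0" using z by (metis carrier_vecD eq_vecI index_zero_vec)
  have "0 < (\<Sum>i<n. (\<mu> - D $$ (i, i)) * (z $ i)^2)"
  proof (rule sum_pos2[of _ k])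
    have "D $$ (k, k) < \<mu>" using k vanish[of k] by force
    thus "0 < (\<mu> - D $$ (k, k)) * (z $ k)^2" using k by simp
    show "0 \<le> (\<mu> - D $$ (i, i)) * (z $ i)^2" if "i \<in> {..<n}" for i
      using that vanish[of i] by (cases "\<mu> \<le> D $$ (i, i)") auto
  qed (use k in auto)
  moreover have "z \<bullet> z = (\<Sum>i<n. (z $ i)^2)"
    using z by (simp add: scalar_prod_def lessThan_atLeast0 power2_eq_square)
  ultimately show ?thesis
    by (simp add: diagonal_quadratic_form[OF D z(1)] left_diff_distrib sum_subtractf sum_distrib_left)
qed

lemma rayleigh_quotient_on_span:
  fixes A :: "real mat" and a b :: real
  assumes A: "A \<in> carrier_mat n n" "transpose_mat A = A"
    and f: "f \<in> carrier_vec n" and g: "g \<in> carrier_vec n"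
    and fg: "f \<bullet> g = 0" and fAg: "f \<bullet> (A *\<^sub>v g) = 0"
    and fAf: "\<mu> * (f \<bullet> f) \<le> f \<bullet> (A *\<^sub>v f)" and gAg: "\<mu> * (g \<bullet> g) \<le> g \<bullet> (A *\<^sub>v g)"
  defines "x \<equiv> a \<cdot>\<^sub>v f + b \<cdot>\<^sub>v g"
  shows "x \<bullet> x = a^2 * (f \<bullet> f) + b^2 * (g \<bullet> g)" and "\<mu> * (x \<bullet> x) \<le> x \<bullet> (A *\<^sub>v x)"
proof -
  have gf: "g \<bullet> f = 0" using fg comm_scalar_prod[OF f g] by simp
  have "(A *\<^sub>v f) \<bullet> g = f \<bullet> (A *\<^sub>v g)"
    using transpose_vec_mult_scalar[OF A(1) g f] A(2) by simp
  hence gAf: "g \<bullet> (A *\<^sub>v f) = 0"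
    using fAg comm_scalar_prod[of g n "A *\<^sub>v f"] A(1) f g by simp
  show xx: "x \<bullet> x = a^2 * (f \<bullet> f) + b^2 * (g \<bullet> g)"
    unfolding x_def using f g fg gf
    by (simp add: add_scalar_prod_distrib scalar_prod_add_distrib power2_eq_square)
  have "x \<bullet> (A *\<^sub>v x) = a^2 * (f \<bullet> (A *\<^sub>v f)) + b^2 * (g \<bullet> (A *\<^sub>v g))"
    unfolding x_def using f g A fAg gAf
    by (simp add: mult_add_distrib_mat_vec mult_mat_vec add_scalar_prod_distrib
        scalar_prod_add_distrib power2_eq_square)
  moreover have "a^2 * (\<mu> * (f \<bullet> f)) \<le> a^2 * (f \<bullet> (A *\<^sub>v f))"
    and "b^2 * (\<mu> * (g \<bullet> g)) \<le> b^2 * (g \<bullet> (A *\<^sub>v g))"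
    using fAf gAg by (simp_all add: mult_left_mono)
  ultimately show "\<mu> * (x \<bullet> x) \<le> x \<bullet> (A *\<^sub>v x)" unfolding xx by (simp add: algebra_simps)
qed

lemma scalar_prod_mult_mat_vec_vec:
  fixes A :: "'a :: comm_semiring_0 mat"
  assumes "A \<in> carrier_mat n n"
  shows "vec n u \<bullet> (A *\<^sub>v vec n w) = (\<Sum>i<n. u i * (\<Sum>j<n. A $$ (i, j) * w j))"
  using assms by (auto simp: scalar_prod_def mult_mat_vec_def lessThan_atLeast0 intro!: sum.cong)

lemma bilinear_form_le_abs:
  fixes h :: "'i \<Rightarrow> 'i \<Rightarrow> real"
  assumes "\<And>i j. i \<in> A \<Longrightarrow> j \<in> A \<Longrightarrow> 0 \<le> h i j"
  shows "(\<Sum>i\<in>A. u i * (\<Sum>j\<in>A. h i j * u j)) \<le> (\<Sum>i\<in>A. \<bar>u i\<bar> * (\<Sum>j\<in>A. h i j * \<bar>u j\<bar>))"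
  unfolding sum_distrib_left
proof (intro sum_mono)
  fix i j assume "i \<in> A" "j \<in> A"
  have "u i * (h i j * u j) \<le> \<bar>u i * (h i j * u j)\<bar>" by simp
  also have "\<dots> = \<bar>u i\<bar> * (h i j * \<bar>u j\<bar>)"
    using assms[OF \<open>i \<in> A\<close> \<open>j \<in> A\<close>] by (simp add: abs_mult)
  finally show "u i * (h i j * u j) \<le> \<bar>u i\<bar> * (h i j * \<bar>u j\<bar>)" .
qed

lemma nontrivial_combination_vanishing:
  fixes u w :: "'i \<Rightarrow> real"
  assumes unique: "\<And>i j. P i \<Longrightarrow> P j \<Longrightarrow> i = j"
  obtains a b where "a \<noteq> 0 \<or> b \<noteq> 0" "\<And>k. P k \<Longrightarrow> a * u k + b * w k = 0"
proof (cases "\<exists>k. P k \<and> (u k \<noteq> 0 \<or> w k \<noteq> 0)")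
  case True
  then obtain k where k: "P k" "u k \<noteq> 0 \<or> w k \<noteq> 0" by blast
  show thesis
    by (rule that[of "w k" "- u k"]) (use k unique in \<open>auto simp: mult.commute\<close>)
next
  case False
  thus thesis by (intro that[of 1 0]) auto
qed

lemma diagonal_entries_ge_two:
  fixes A Q :: "real mat"
  assumes A: "A \<in> carrier_mat n n" "transpose_mat A = A"
    and Q: "Q \<in> carrier_mat n n" "transpose_mat Q * Q = 1\<^sub>m n"
    and dg: "diagonal_mat (transpose_mat Q * A * Q)"
    and f: "f \<in> carrier_vec n" "f \<noteq> 0\<^sub>v n" and g: "g \<in> carrier_vec n" "g \<noteq> 0\<^sub>v n"
    and fg: "f \<bullet> g = 0" and fAg: "f \<bullet> (A *\<^sub>v g) = 0"
    and fAf: "\<mu> * (f \<bullet> f) \<le> f \<bullet> (A *\<^sub>v f)" and gAg: "\<mu> * (g \<bullet> g) \<le> g \<bullet> (A *\<^sub>v g)"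
  defines "D \<equiv> transpose_mat Q * A * Q"
  shows "\<exists>i j. i < n \<and> j < n \<and> i \<noteq> j \<and> \<mu> \<le> D $$ (i, i) \<and> \<mu> \<le> D $$ (j, j)"
proof (rule ccontr)
  assume "\<not> ?thesis"
  \<comment> \<open>Then at most one entry is \<open>\<ge> \<mu>\<close>, and some combination of \<open>f\<close> and \<open>g\<close> avoids it.\<close>
  then obtain a b where ab: "a \<noteq> 0 \<or> b \<noteq> 0" and vanish:
    "\<And>k. k < n \<and> \<mu> \<le> D $$ (k, k)
       \<Longrightarrow> a * (transpose_mat Q *\<^sub>v f) $ k + b * (transpose_mat Q *\<^sub>v g) $ k = 0"
    using nontrivial_combination_vanishing[where P = "\<lambda>k. k < n \<and> \<mu> \<le> D $$ (k, k)"
        and u = "\<lambda>k. (transpose_mat Q *\<^sub>v f) $ k" and w = "\<lambda>k. (transpose_mat Q *\<^sub>v g) $ k"]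
    by blast
  define x where "x = a \<cdot>\<^sub>v f + b \<cdot>\<^sub>v g"
  have x: "x \<in> carrier_vec n" unfolding x_def using f g by simp
  note span = rayleigh_quotient_on_span[OF A f(1) g(1) fg fAg fAf gAg, of a b, folded x_def]
  have "0 < f \<bullet> f" "0 < g \<bullet> g"
    using conjugate_square_greater_0_vec[OF f(1)] conjugate_square_greater_0_vec[OF g(1)] f g
    by simp_all
  hence x_pos: "0 < x \<bullet> x" unfolding span(1) using ab by (auto intro: add_pos_nonneg add_nonneg_pos)
  define z where "z = transpose_mat Q *\<^sub>v x"
  have zz: "z \<bullet> z = x \<bullet> x" and zDz: "z \<bullet> (D *\<^sub>v z) = x \<bullet> (A *\<^sub>v x)"
    unfolding z_def D_def
    using orthogonal_transpose_scalar_prod[OF Q x x] orthogonal_congruence_mult_vec[OF Q A(1) x]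
      orthogonal_transpose_scalar_prod[OF Q x, of "A *\<^sub>v x"] A(1) x by simp_all
  have z: "z \<in> carrier_vec n" unfolding z_def using Q x by simp
  have z0: "z \<noteq> 0\<^sub>v n" using zz x_pos by auto
  have "z = a \<cdot>\<^sub>v (transpose_mat Q *\<^sub>v f) + b \<cdot>\<^sub>v (transpose_mat Q *\<^sub>v g)"
    unfolding z_def x_def using Q f g
    by (simp add: mult_add_distrib_mat_vec[of _ n n] mult_mat_vec[of _ n n])
  hence "z $ k = 0" if "k < n" "\<mu> \<le> D $$ (k, k)" for k
    using vanish[OF conjI[OF that]] Q f g that by simp
  moreover have "D \<in> carrier_mat n n" "diagonal_mat D" unfolding D_def using A Q dg by auto
  ultimately have "z \<bullet> (D *\<^sub>v z) < \<mu> * (z \<bullet> z)"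
    using diagonal_quadratic_form_less[OF _ _ z z0] by blast
  with span(2) show False unfolding zz zDz by simp
qed

theorem eigenvalues_desc_second_ge:
  fixes A :: "real mat"
  assumes A: "A \<in> carrier_mat n n" "transpose_mat A = A"
    and f: "f \<in> carrier_vec n" "f \<noteq> 0\<^sub>v n" and g: "g \<in> carrier_vec n" "g \<noteq> 0\<^sub>v n"
    and fg: "f \<bullet> g = 0" and fAg: "f \<bullet> (A *\<^sub>v g) = 0"
    and fAf: "\<mu> * (f \<bullet> f) \<le> f \<bullet> (A *\<^sub>v f)" and gAg: "\<mu> * (g \<bullet> g) \<le> g \<bullet> (A *\<^sub>v g)"
  shows "\<mu> \<le> eigenvalues_desc A ! 1"
proof -
  obtain Q where Q: "Q \<in> carrier_mat n n" "transpose_mat Q * Q = 1\<^sub>m n"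
    and dg: "diagonal_mat (transpose_mat Q * A * Q)"
    using real_symmetric_orthogonally_diagonalizable[OF A] by blast
  then obtain i j where "i < n" "j < n" "i \<noteq> j"
    "\<mu> \<le> (transpose_mat Q * A * Q) $$ (i, i)" "\<mu> \<le> (transpose_mat Q * A * Q) $$ (j, j)"
    using diagonal_entries_ge_two[OF A Q dg f g fg fAg fAf gAg] by blast
  thus ?thesis
    unfolding eigenvalues_desc_orthogonal_diag[OF A(1) Q dg]
    by (intro rev_sort_nth_one_ge[of i _ j]) simp_all
qed

section \<open>Graph distance\<close>

definition reachable :: "(nat \<Rightarrow> nat \<Rightarrow> bool) \<Rightarrow> nat \<Rightarrow> nat \<Rightarrow> bool" where
  "reachable E x y \<longleftrightarrow> (\<exists>xs. is_walk E xs \<and> hd xs = x \<and> last xs = y)"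

lemma is_walk_snoc: "is_walk E xs \<Longrightarrow> E (last xs) b \<Longrightarrow> is_walk E (xs @ [b])"
  by (induction E xs rule: is_walk.induct) auto

lemma is_walk_snocD: "is_walk E (ys @ [b]) \<Longrightarrow> ys \<noteq> [] \<Longrightarrow> is_walk E ys \<and> E (last ys) b"
  by (induction E ys rule: is_walk.induct) auto

lemma is_walk_map: "is_walk E xs \<Longrightarrow> (\<And>a b. E a b \<Longrightarrow> E (s a) (s b)) \<Longrightarrow> is_walk E (map s xs)"
  by (induction E xs rule: is_walk.induct) auto

lemma gdist_le_walk:
  assumes "is_walk E xs" "hd xs = x" "last xs = y" "length xs = Suc k"
  shows "gdist E x y \<le> k"
  unfolding gdist_def by (rule Least_le) (use assms in blast)

lemma shortest_walk_exists:
  assumes "reachable E x y"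
  obtains xs where "is_walk E xs" "hd xs = x" "last xs = y" "length xs = Suc (gdist E x y)"
proof -
  obtain xs where xs: "is_walk E xs" "hd xs = x" "last xs = y"
    using assms unfolding reachable_def by blast
  then obtain k where "length xs = Suc k" by (cases xs) auto
  with xs have "\<exists>k xs. is_walk E xs \<and> hd xs = x \<and> last xs = y \<and> length xs = Suc k" by blast
  from LeastI_ex[OF this] show thesis using that unfolding gdist_def by blast
qed

lemma gdist_self: "gdist E x x = 0"
  using gdist_le_walk[of E "[x]" x x 0] by simp

lemma gdist_eq_0D:
  assumes "reachable E x y" "gdist E x y = 0"
  shows "x = y"
proof -
  obtain xs where "hd xs = x" "last xs = y" "length xs = Suc (gdist E x y)"
    by (rule shortest_walk_exists[OF assms(1)])
  thus ?thesis using assms(2) by (cases xs) auto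
qed

lemma gdist_edge_le:
  assumes "reachable E x a" "E a b"
  shows "gdist E x b \<le> gdist E x a + 1"
proof -
  obtain xs where xs: "is_walk E xs" "hd xs = x" "last xs = a" "length xs = Suc (gdist E x a)"
    using shortest_walk_exists[OF assms(1)] .
  hence "xs \<noteq> []" by auto
  thus ?thesis
    using xs is_walk_snoc[OF xs(1)] assms(2) by (intro gdist_le_walk[of E "xs @ [b]"]) auto
qed

lemma gdist_predecessor:
  assumes "reachable E x i" "gdist E x i = Suc d"
  obtains p where "E p i" "reachable E x p" "gdist E x p = d"
proof -
  obtain xs where xs: "is_walk E xs" "hd xs = x" "last xs = i" "length xs = Suc (Suc d)"
    using shortest_walk_exists[OF assms(1)] unfolding assms(2) .
  define ys where "ys = butlast xs"
  have len_ys: "length ys = Suc d" using xs(4) unfolding ys_def by simp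
  hence ys_ne: "ys \<noteq> []" by auto
  have "xs \<noteq> []" using xs(4) by auto
  hence xs_eq: "xs = ys @ [i]" using xs(3) unfolding ys_def by (metis append_butlast_last_id)
  have ys_walk: "is_walk E ys" "E (last ys) i" using is_walk_snocD xs(1) xs_eq ys_ne by auto
  have ys_ends: "hd ys = x" "length ys = Suc d" using xs(2) xs_eq ys_ne len_ys by auto
  hence reach: "reachable E x (last ys)" using ys_walk unfolding reachable_def by blast
  have "gdist E x (last ys) \<le> d" using gdist_le_walk ys_walk ys_ends by blast
  moreover have "Suc d \<le> gdist E x (last ys) + 1"
    using gdist_edge_le[OF reach ys_walk(2)] assms(2) by simp
  ultimately show thesis using that ys_walk(2) reach by simp
qed

lemma gdist_map_le:
  assumes "reachable E a b" and hom: "\<And>x y. E x y \<Longrightarrow> E (s x) (s y)"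
  shows "gdist E (s a) (s b) \<le> gdist E a b"
proof -
  obtain xs where xs: "is_walk E xs" "hd xs = a" "last xs = b" "length xs = Suc (gdist E a b)"
    using shortest_walk_exists[OF assms(1)] .
  hence "xs \<noteq> []" by auto
  thus ?thesis using xs is_walk_map[OF xs(1) hom]
    by (intro gdist_le_walk[of E "map s xs"]) (auto simp: hd_map last_map)
qed

section \<open>Graphs with an involution\<close>

locale connected_graph_involution =
  fixes n :: nat and E :: "nat \<Rightarrow> nat \<Rightarrow> bool" and \<sigma> :: "nat \<Rightarrow> nat"
  assumes graph: "simple_graph n E" and conn: "connected_graph n E"
    and inv: "graph_involution n E \<sigma>"
begin

lemma edge_less: "E a b \<Longrightarrow> a < n \<and> b < n"
  using graph unfolding simple_graph_def by auto

lemma edge_sym: "E a b \<Longrightarrow> E b a"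
  using graph unfolding simple_graph_def by auto

lemma involution_less: "x < n \<Longrightarrow> \<sigma> x < n"
  using inv unfolding graph_involution_def by auto

lemma involution_involutive: "x < n \<Longrightarrow> \<sigma> (\<sigma> x) = x"
  using inv unfolding graph_involution_def by auto

lemma involution_edge: "E a b \<Longrightarrow> E (\<sigma> a) (\<sigma> b)"
  using inv unfolding graph_involution_def by auto

lemma involution_edge_iff: "a < n \<Longrightarrow> b < n \<Longrightarrow> E (\<sigma> a) (\<sigma> b) \<longleftrightarrow> E a b"
  using involution_edge[of "\<sigma> a" "\<sigma> b"] involution_edge[of a b] involution_involutive by auto

lemma reachable_all: "a < n \<Longrightarrow> b < n \<Longrightarrow> reachable E a b"
  using conn unfolding connected_graph_def reachable_def by auto

lemma gdist_involution: "a < n \<Longrightarrow> b < n \<Longrightarrow> gdist E (\<sigma> a) (\<sigma> b) = gdist E a b"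
  using gdist_map_le[OF reachable_all, of a b \<sigma>] involution_edge
    gdist_map_le[OF reachable_all, of "\<sigma> a" "\<sigma> b" \<sigma>] involution_less involution_involutive
  by (metis le_antisym)

lemma sum_involution_reindex: "(\<Sum>j<n. F (\<sigma> j)) = (\<Sum>j<n. F j)"
proof -
  have "bij_betw \<sigma> {..<n} {..<n}"
    by (rule bij_betwI[of _ _ _ \<sigma>]) (auto simp: involution_less involution_involutive)
  thus ?thesis using sum.reindex_bij_betw by blast
qed

lemma sum_odd_eq_0:
  fixes F :: "nat \<Rightarrow> real"
  assumes "\<And>x. x < n \<Longrightarrow> F (\<sigma> x) = - F x"
  shows "(\<Sum>x<n. F x) = 0"
proof -
  have "(\<Sum>x<n. F x) = (\<Sum>x<n. - F x)"
    by (subst sum_involution_reindex[symmetric]) (simp add: assms)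
  thus ?thesis by (simp add: sum_negf)
qed

lemma bilinear_form_odd_even_eq_0:
  fixes h :: "nat \<Rightarrow> nat \<Rightarrow> real"
  assumes h: "\<And>i j. i < n \<Longrightarrow> j < n \<Longrightarrow> h (\<sigma> i) (\<sigma> j) = h i j"
    and u: "\<And>x. x < n \<Longrightarrow> u (\<sigma> x) = - u x" and w: "\<And>x. x < n \<Longrightarrow> w (\<sigma> x) = w x"
  shows "(\<Sum>i<n. u i * (\<Sum>j<n. h i j * w j)) = 0"
proof (rule sum_odd_eq_0)
  fix i assume i: "i < n"
  have "(\<Sum>j<n. h (\<sigma> i) j * w j) = (\<Sum>j<n. h (\<sigma> i) (\<sigma> j) * w (\<sigma> j))"
    by (rule sum_involution_reindex[symmetric])
  also have "\<dots> = (\<Sum>j<n. h i j * w j)" using i by (intro sum.cong) (simp_all add: h w)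
  finally show "u (\<sigma> i) * (\<Sum>j<n. h (\<sigma> i) j * w j) = - (u i * (\<Sum>j<n. h i j * w j))"
    using u[OF i] by simp
qed

end

section \<open>The antisymmetric test vector\<close>

locale signed_test_vector = connected_graph_involution +
  fixes v :: nat and Q :: real and N :: "nat set"
  assumes v: "v < n" "\<sigma> v \<noteq> v" and Q: "Q \<ge> 1"
    and N: "pair_selection n \<sigma> N" "v \<in> N"
    and N_closer: "\<forall>x<n. \<sigma> x \<noteq> x \<and> gdist E v x < gdist E (\<sigma> v) x \<longrightarrow> x \<in> N"
begin

definition closer :: "nat \<Rightarrow> bool" where
  "closer x \<longleftrightarrow> gdist E v x < gdist E (\<sigma> v) x"

definition y :: "nat \<Rightarrow> real" where
  "y x = (if closer x then Q powi (- int (gdist E v x)) else 0)"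

definition f :: "nat \<Rightarrow> real" where
  "f x = (if x \<in> N then y x else if \<sigma> x \<in> N then - y (\<sigma> x) else 0)"

definition r :: "nat \<Rightarrow> real" where
  "r x = (\<Sum>j<n. (if E x j then 1 else 0) * f j)"

lemma N_less: "x \<in> N \<Longrightarrow> x < n \<and> \<sigma> x \<noteq> x"
  using N(1) unfolding pair_selection_def by auto

lemma involution_notin_N: "x \<in> N \<Longrightarrow> \<sigma> x \<notin> N"
  using N(1) N_less unfolding pair_selection_def by blast

lemma finite_N: "finite N"
  using N_less by (intro finite_subset[of N "{..<n}"]) auto

lemma y_closer: "closer x \<Longrightarrow> y x = 1 / Q ^ gdist E v x"
  unfolding y_def by (simp add: power_int_minus power_int_of_nat divide_inverse)

lemma y_nonneg: "0 \<le> y x"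
  using Q by (cases "closer x") (auto simp: y_closer y_def)

lemma closer_v: "closer v"
  using gdist_eq_0D[OF reachable_all[OF involution_less[OF v(1)] v(1)]] v
  unfolding closer_def gdist_self by auto

lemma y_v: "y v = 1"
  using closer_v by (simp add: y_closer gdist_self)

lemma f_N: "x \<in> N \<Longrightarrow> f x = y x"
  unfolding f_def by simp

lemma f_involution: "x < n \<Longrightarrow> f (\<sigma> x) = - f x"
  using involution_notin_N involution_involutive unfolding f_def by auto

lemma f_outside: "x \<notin> N \<Longrightarrow> \<sigma> x \<notin> N \<Longrightarrow> f x = 0"
  unfolding f_def by simp

lemma f_v: "f v = 1" and f_involution_v: "f (\<sigma> v) = -1"
  using f_N[OF N(2)] f_involution[OF v(1)] y_v by simp_all

lemma r_involution: "x < n \<Longrightarrow> r (\<sigma> x) = - r x"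
  unfolding r_def
  by (subst sum_involution_reindex[symmetric])
    (simp add: involution_edge_iff f_involution sum_negf)

lemma negative_neighbour:
  assumes i: "closer i" "i < n" and ij: "E i j" and neg: "f j < 0"
  shows "f j = - y i" and "gdist E v (\<sigma> j) = gdist E v i"
proof -
  have j: "j < n" using edge_less[OF ij] by simp
  have "j \<notin> N" using neg y_nonneg[of j] f_N by force
  moreover have "\<sigma> j \<in> N" using neg \<open>j \<notin> N\<close> f_outside by force
  ultimately have fj: "f j = - y (\<sigma> j)" unfolding f_def by simp
  hence u: "closer (\<sigma> j)" using neg unfolding y_def by (auto split: if_splits)
  have sv: "\<sigma> v < n" and sj: "\<sigma> j < n" using v(1) j by (simp_all add: involution_less)
  have "gdist E v (\<sigma> j) < gdist E v j"
    using u gdist_involution[OF v(1) j] unfolding closer_def by simp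
  also have "\<dots> \<le> gdist E v i + 1" using gdist_edge_le[OF reachable_all[OF v(1) i(2)] ij] .
  finally have le1: "gdist E v (\<sigma> j) \<le> gdist E v i" by simp
  have "gdist E v i < gdist E (\<sigma> v) i" using i(1) unfolding closer_def .
  also have "\<dots> \<le> gdist E (\<sigma> v) j + 1" using gdist_edge_le[OF reachable_all[OF sv j] edge_sym[OF ij]] .
  also have "gdist E (\<sigma> v) j = gdist E v (\<sigma> j)"
    using gdist_involution[OF v(1) sj] involution_involutive[OF j] by simp
  finally have le2: "gdist E v i \<le> gdist E v (\<sigma> j)" by simp
  show "gdist E v (\<sigma> j) = gdist E v i" using le1 le2 by simp
  thus "f j = - y i" using fj u i(1) by (simp add: y_closer)
qed

lemma r_at_v_ge: "-1 \<le> r v"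
proof -
  have summand_ge: "(if j = \<sigma> v then -1 else 0) \<le> (if E v j then 1 else 0) * f j" if j: "j < n" for j
  proof (cases "E v j \<and> f j < 0")
    case True
    hence "gdist E v (\<sigma> j) = 0" using negative_neighbour(2)[OF closer_v v(1)] gdist_self by simp
    hence "j = \<sigma> v"
      using gdist_eq_0D[OF reachable_all[OF v(1) involution_less[OF j]]] involution_involutive[OF j]
      by metis
    thus ?thesis using f_involution_v by simp
  qed (auto simp: not_less f_involution_v)
  have "(\<Sum>j<n. if j = \<sigma> v then -1 else 0) \<le> r v"
    unfolding r_def by (intro sum_mono summand_ge) simp
  thus ?thesis using involution_less[OF v(1)] by simp
qed

lemma closer_predecessor:
  assumes i: "closer i" "i < n" "i \<noteq> v"
  obtains p where "p \<in> N" "E p i" "y p = Q * y i"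
proof -
  have "gdist E v i \<noteq> 0" using gdist_eq_0D[OF reachable_all[OF v(1) i(2)]] i(3) by auto
  then obtain d where d: "gdist E v i = Suc d" by (cases "gdist E v i") auto
  obtain p where p: "E p i" "gdist E v p = d"
    using gdist_predecessor[OF reachable_all[OF v(1) i(2)] d] by blast
  have pn: "p < n" using edge_less[OF p(1)] by simp
  have "Suc d < gdist E (\<sigma> v) i" using i(1) d unfolding closer_def by simp
  also have "\<dots> \<le> gdist E (\<sigma> v) p + 1"
    using gdist_edge_le[OF reachable_all[OF involution_less[OF v(1)] pn] p(1)] .
  finally have cp: "closer p" using p(2) unfolding closer_def by simp
  have "\<sigma> p \<noteq> p"
    using cp gdist_involution[OF v(1) pn] unfolding closer_def by auto
  hence "p \<in> N" using N_closer pn cp unfolding closer_def by blast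
  moreover have "y p = Q * y i"
    using cp i(1) d p(2) Q by (simp add: y_closer)
  ultimately show thesis using that p(1) by blast
qed

lemma r_eq_sum_neighbours: "r i = (\<Sum>j\<in>{u \<in> N \<union> \<sigma> ` N. E i u}. f j)"
proof -
  let ?Nb = "{u \<in> N \<union> \<sigma> ` N. E i u}"
  have "?Nb \<subseteq> {..<n}" using N_less involution_less by auto
  have "r i = (\<Sum>j<n. if j \<in> ?Nb then f j else 0)"
    unfolding r_def
  proof (intro sum.cong refl)
    fix j assume "j \<in> {..<n}"
    hence "f j = 0" if "j \<notin> N \<union> \<sigma> ` N"
      using that f_outside[of j] involution_involutive[of j] by (metis UnI1 UnI2 image_eqI lessThan_iff)
    thus "(if E i j then 1 else 0) * f j = (if j \<in> ?Nb then f j else 0)" by auto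
  qed
  also have "\<dots> = (\<Sum>j\<in>?Nb. f j)"
    using sum.inter_restrict[of "{..<n}" f ?Nb] \<open>?Nb \<subseteq> {..<n}\<close> by (simp add: Int_absorb1)
  finally show ?thesis .
qed

lemma y_mult_r_ge:
  assumes i: "i \<in> N" "i \<noteq> v"
  shows "(Q - (real (degree_in E (N \<union> \<sigma> ` N) i) - 1)) * (y i)^2 \<le> y i * r i"
proof (cases "closer i")
  case False
  thus ?thesis by (simp add: y_def)
next
  case True
  have i_n: "i < n" using N_less[OF i(1)] by simp
  define Nb where "Nb = {u \<in> N \<union> \<sigma> ` N. E i u}"
  have fin: "finite Nb" unfolding Nb_def using finite_N by simp
  obtain p where p: "p \<in> N" "E p i" "y p = Q * y i"
    using closer_predecessor[OF True i_n i(2)] .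
  have pNb: "p \<in> Nb" unfolding Nb_def using p edge_sym by blast
  have "- y i \<le> f j" if "j \<in> Nb" for j
    using negative_neighbour(1)[OF True i_n] that y_nonneg[of i] unfolding Nb_def
    by (cases "f j < 0") auto
  hence "(\<Sum>j\<in>Nb - {p}. - y i) \<le> (\<Sum>j\<in>Nb - {p}. f j)" by (intro sum_mono) auto
  moreover have "r i = f p + (\<Sum>j\<in>Nb - {p}. f j)"
    unfolding r_eq_sum_neighbours Nb_def[symmetric] using fin pNb by (simp add: sum.remove)
  moreover have "0 < card Nb" using fin pNb card_gt_0_iff by blast
  hence "real (card (Nb - {p})) = real (card Nb) - 1"
    using fin pNb by (simp add: of_nat_diff card_Diff_singleton)
  ultimately have "Q * y i - (real (card Nb) - 1) * y i \<le> r i"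
    using p f_N by simp
  from mult_left_mono[OF this y_nonneg]
  show ?thesis unfolding degree_in_def Nb_def[symmetric] by (simp add: power2_eq_square algebra_simps)
qed

lemma sum_even_eq_double:
  fixes F :: "nat \<Rightarrow> real"
  assumes even: "\<And>x. x < n \<Longrightarrow> F (\<sigma> x) = F x"
    and zero: "\<And>x. x < n \<Longrightarrow> x \<notin> N \<Longrightarrow> \<sigma> x \<notin> N \<Longrightarrow> F x = 0"
  shows "(\<Sum>x<n. F x) = 2 * (\<Sum>x\<in>N. F x)"
proof -
  have sub: "N \<union> \<sigma> ` N \<subseteq> {..<n}" using N_less involution_less by auto
  have disj: "N \<inter> \<sigma> ` N = {}" using involution_notin_N by auto
  have inj: "inj_on \<sigma> N" by (rule inj_onI) (metis N_less involution_involutive)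
  have "(\<Sum>x<n. F x) = (\<Sum>x\<in>N \<union> \<sigma> ` N. F x)"
  proof (rule sum.mono_neutral_right[OF finite_lessThan sub], intro ballI)
    fix x assume "x \<in> {..<n} - (N \<union> \<sigma> ` N)"
    thus "F x = 0" using zero involution_involutive by (metis DiffE UnCI image_eqI lessThan_iff)
  qed
  also have "\<dots> = (\<Sum>x\<in>N. F x) + (\<Sum>x\<in>N. F (\<sigma> x))"
    using finite_N disj inj by (simp add: sum.union_disjoint sum.reindex)
  also have "(\<Sum>x\<in>N. F (\<sigma> x)) = (\<Sum>x\<in>N. F x)" using N_less even by simp
  finally show ?thesis by simp
qed

lemma Hmat_index:
  "i < n \<Longrightarrow> j < n \<Longrightarrow> Hmat n E \<sigma> v Q $$ (i, j)
     = (if E i j then 1 else 0) + (if i = j \<and> (i = v \<or> i = \<sigma> v) then Q else 0)"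
  unfolding Hmat_def by simp

lemma Hmat_carrier: "Hmat n E \<sigma> v Q \<in> carrier_mat n n"
  unfolding Hmat_def by simp

lemma Hmat_symmetric: "transpose_mat (Hmat n E \<sigma> v Q) = Hmat n E \<sigma> v Q"
  by (rule eq_matI) (auto simp: Hmat_index edge_sym Hmat_carrier[THEN carrier_matD(1)]
      Hmat_carrier[THEN carrier_matD(2)])

lemma Hmat_involution:
  "i < n \<Longrightarrow> j < n \<Longrightarrow> Hmat n E \<sigma> v Q $$ (\<sigma> i, \<sigma> j) = Hmat n E \<sigma> v Q $$ (i, j)"
  using involution_less involution_involutive v(1) involution_edge_iff
  by (simp add: Hmat_index) metis

lemma Hmat_nonneg: "i < n \<Longrightarrow> j < n \<Longrightarrow> 0 \<le> Hmat n E \<sigma> v Q $$ (i, j)"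
  using Q by (simp add: Hmat_index)

lemma quadratic_form_f:
  "(\<Sum>i<n. f i * (\<Sum>j<n. Hmat n E \<sigma> v Q $$ (i, j) * f j)) = 2 * (\<Sum>i\<in>N. y i * r i) + 2 * Q"
proof -
  have sv: "\<sigma> v < n" using involution_less[OF v(1)] .
  have inner: "(\<Sum>j<n. Hmat n E \<sigma> v Q $$ (i, j) * f j)
      = r i + (if i = v \<or> i = \<sigma> v then Q * f i else 0)" if i: "i < n" for i
    unfolding r_def using i
    by (simp add: Hmat_index distrib_right sum.distrib if_distrib[of "\<lambda>x. x * f _"] sum.delta
        cong: if_cong)
  have "(\<Sum>i<n. f i * (\<Sum>j<n. Hmat n E \<sigma> v Q $$ (i, j) * f j))
      = (\<Sum>i<n. f i * r i + (if i = v \<or> i = \<sigma> v then Q * (f i)^2 else 0))"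
    by (intro sum.cong refl) (auto simp: inner distrib_left power2_eq_square)
  also have "\<dots> = (\<Sum>i<n. f i * r i) + (\<Sum>i<n. if i = v \<or> i = \<sigma> v then Q * (f i)^2 else 0)"
    by (rule sum.distrib)
  also have "(\<Sum>i<n. f i * r i) = 2 * (\<Sum>i\<in>N. f i * r i)"
    by (rule sum_even_eq_double) (simp_all add: f_involution r_involution f_outside)
  also have "(\<Sum>i\<in>N. f i * r i) = (\<Sum>i\<in>N. y i * r i)" by (simp add: f_N)
  also have "(\<Sum>i<n. if i = v \<or> i = \<sigma> v then Q * (f i)^2 else 0) = Q * (f v)^2 + Q * (f (\<sigma> v))^2"
  proof -
    have "{x. x < n \<and> (x = v \<or> x = \<sigma> v)} = {v, \<sigma> v}" using v sv by auto
    thus ?thesis using v by (simp add: sum.If_cases Int_def)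
  qed
  finally show ?thesis by (simp add: f_v f_involution_v)
qed

lemma sum_square_f: "(\<Sum>i<n. (f i)^2) = 2 * (\<Sum>i\<in>N. (y i)^2)"
  by (subst sum_even_eq_double) (simp_all add: f_involution f_outside f_N)

lemma sum_y_mult_r_ge:
  "Q * (\<Sum>i\<in>N. (y i)^2) - (1 + (\<Sum>i\<in>N - {v}. (real (degree_in E (N \<union> \<sigma> ` N) i) - 1) * (y i)^2))
     \<le> Q + (\<Sum>i\<in>N. y i * r i)"
proof -
  have "(\<Sum>i\<in>N - {v}. (Q - (real (degree_in E (N \<union> \<sigma> ` N) i) - 1)) * (y i)^2)
      \<le> (\<Sum>i\<in>N - {v}. y i * r i)"
    by (intro sum_mono y_mult_r_ge) auto
  moreover have "-1 \<le> y v * r v" using r_at_v_ge y_v by simp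
  ultimately show ?thesis
    using finite_N N(2) y_v
    by (simp add: sum.remove sum_subtractf sum_distrib_left algebra_simps)
qed

theorem second_eigenvalue_ge:
  "Q - (1 + (\<Sum>i\<in>N - {v}. (real (degree_in E (N \<union> \<sigma> ` N) i) - 1) * (y i)^2))
         / (\<Sum>i\<in>N. (y i)^2)
     \<le> eigenvalues_desc (Hmat n E \<sigma> v Q) ! 1"
  (is "Q - (1 + ?D) / ?S \<le> _")
proof (rule eigenvalues_desc_second_ge[OF Hmat_carrier Hmat_symmetric])
  let ?H = "Hmat n E \<sigma> v Q" and ?g = "\<lambda>i. \<bar>f i\<bar>"
  have "1 \<le> ?S"
    using sum.remove[OF finite_N N(2), of "\<lambda>i. (y i)^2"] y_v sum_nonneg[of "N - {v}" "\<lambda>i. (y i)^2"]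
    by simp
  hence S: "(Q - (1 + ?D) / ?S) * (2 * ?S) = 2 * (Q * ?S - (1 + ?D))"
    by (simp add: field_simps)
  show "vec n f \<in> carrier_vec n" "vec n ?g \<in> carrier_vec n" by simp_all
  show "vec n f \<noteq> 0\<^sub>v n" "vec n ?g \<noteq> 0\<^sub>v n"
    using v(1) f_v by (metis abs_one index_vec index_zero_vec(1) zero_neq_one)+
  show "vec n f \<bullet> vec n ?g = 0"
    by (simp add: scalar_prod_def lessThan_atLeast0[symmetric])
      (rule sum_odd_eq_0, simp add: f_involution)
  show "vec n f \<bullet> (?H *\<^sub>v vec n ?g) = 0"
    unfolding scalar_prod_mult_mat_vec_vec[OF Hmat_carrier]
    by (rule bilinear_form_odd_even_eq_0) (simp_all add: Hmat_involution f_involution)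
  have ff: "vec n f \<bullet> vec n f = 2 * ?S" and gg: "vec n ?g \<bullet> vec n ?g = 2 * ?S"
    using sum_square_f by (simp_all add: scalar_prod_def lessThan_atLeast0 power2_eq_square)
  have fHf: "(Q - (1 + ?D) / ?S) * (vec n f \<bullet> vec n f) \<le> vec n f \<bullet> (?H *\<^sub>v vec n f)"
    unfolding scalar_prod_mult_mat_vec_vec[OF Hmat_carrier] quadratic_form_f ff S
    using sum_y_mult_r_ge by simp
  thus "(Q - (1 + ?D) / ?S) * (vec n f \<bullet> vec n f) \<le> vec n f \<bullet> (?H *\<^sub>v vec n f)" .
  show "(Q - (1 + ?D) / ?S) * (vec n ?g \<bullet> vec n ?g) \<le> vec n ?g \<bullet> (?H *\<^sub>v vec n ?g)"
    using fHf bilinear_form_le_abs[of "{..<n}" "\<lambda>i j. ?H $$ (i, j)" f] Hmat_nonneg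
    unfolding scalar_prod_mult_mat_vec_vec[OF Hmat_carrier] ff gg by simp
qed

end

theorem theorem5:
  fixes n :: nat and E :: "nat \<Rightarrow> nat \<Rightarrow> bool" and \<sigma> :: "nat \<Rightarrow> nat"
    and v :: nat and Q :: real and N :: "nat set"
  assumes graph: "simple_graph n E" and conn: "connected_graph n E"
    and inv: "graph_involution n E \<sigma>"
    and v: "v < n" "\<sigma> v \<noteq> v"
    and Q: "Q > 2 * real (max_degree n E)" "Q \<ge> 1"
    and N: "pair_selection n \<sigma> N" "v \<in> N"
    and N_closer: "\<forall>x<n. \<sigma> x \<noteq> x \<and> gdist E v x < gdist E (\<sigma> v) x \<longrightarrow> x \<in> N"
  defines "y \<equiv> (\<lambda>x. if gdist E v x < gdist E (\<sigma> v) x then Q powi (- int (gdist E v x)) else 0)"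
  shows "eigenvalues_desc (Hmat n E \<sigma> v Q) ! 1 \<ge>
     Q - (1 + (\<Sum>x\<in>N - {v}. (real (degree_in E (N \<union> \<sigma> ` N) x) - 1) * (y x)^2))
           / (\<Sum>x\<in>N. (y x)^2)"
proof -
  interpret L: signed_test_vector n E \<sigma> v Q N
    using graph conn inv v Q(2) N N_closer by unfold_locales
  have "y = L.y" unfolding y_def L.y_def L.closer_def ..
  thus ?thesis using L.second_eigenvalue_ge by simp
qed

end
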